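(* Let $K\subseteq\mathbb{R}$ be Abel sequentially compact and let $F\subseteq K$ be Abel sequentially closed. Then $F$ is Abel sequentially compact.
   Context: A sequence $(p_n)_{n\ge0}$ is Abel convergent to $\ell$ if $\sum_{k=0}^{\infty}p_k x^k$ converges for every $0\le x<1$ and $\lim_{x\to 1^-}(1-x)\sum_{k=0}^{\infty}p_k x^k=\ell$. A subset $F\subseteq\mathbb{R}$ is Abel sequentially compact if every sequence of points of $F$ has a subsequence Abel convergent to a limit belonging to $F$. The Abel sequential closure $\overline{F}^{Abel}$ of $F$ is the set of all $\ell\in\mathbb{R}$ such that some sequence of points of $F$ is Abel convergent to $\ell$; $F$ is Abel sequentially closed if $\overline{F}^{Abel}=F$. *)

theory Defs
  imports "HOL-Analysis.Analysis"
begin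

definition abel_convergent :: "(nat \<Rightarrow> real) \<Rightarrow> real \<Rightarrow> bool" where
  "abel_convergent p l \<longleftrightarrow>
     (\<forall>x::real. 0 \<le> x \<and> x < 1 \<longrightarrow> summable (\<lambda>k. p k * x ^ k)) \<and>
     ((\<lambda>x. (1 - x) * (\<Sum>k. p k * x ^ k)) \<longlongrightarrow> l) (at_left 1)"

definition abel_seq_compact :: "real set \<Rightarrow> bool" where
  "abel_seq_compact F \<longleftrightarrow>
     (\<forall>p::nat \<Rightarrow> real. (\<forall>n. p n \<in> F) \<longrightarrow>
        (\<exists>r l. strict_mono r \<and> l \<in> F \<and> abel_convergent (p \<circ> r) l))"

definition abel_closure :: "real set \<Rightarrow> real set" where
  "abel_closure F = {l. \<exists>p::nat \<Rightarrow> real. (\<forall>n. p n \<in> F) \<and> abel_convergent p l}"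

definition abel_seq_closed :: "real set \<Rightarrow> bool" where
  "abel_seq_closed F \<longleftrightarrow> abel_closure F = F"

end

theory Submission
  imports Defs
begin

lemma abel_seq_closedD:
  assumes "abel_seq_closed F" and "\<And>n. p n \<in> F" and "abel_convergent p l"
  shows "l \<in> F"
proof -
  have "l \<in> abel_closure F"
    using assms(2,3) unfolding abel_closure_def by blast
  then show ?thesis
    using assms(1) unfolding abel_seq_closed_def by simp
qed

theorem corollary15:
  fixes K F :: "real set"
  assumes "abel_seq_compact K"
    and "abel_seq_closed F"
    and "F \<subseteq> K"
  shows "abel_seq_compact F"
  unfolding abel_seq_compact_def
proof (intro allI impI)
  fix p :: "nat \<Rightarrow> real"
  assume pF: "\<forall>n. p n \<in> F"
  then have "\<forall>n. p n \<in> K"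
    using assms(3) by blast
  then obtain r l where r: "strict_mono r" and conv: "abel_convergent (p \<circ> r) l"
    using assms(1) unfolding abel_seq_compact_def by blast
  have "l \<in> F"
    using abel_seq_closedD[OF assms(2) _ conv] pF by simp
  with r conv show "\<exists>r l. strict_mono r \<and> l \<in> F \<and> abel_convergent (p \<circ> r) l"
    by blast
qed

end
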